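(* Let $X$ be a $T_0$ space. The following are equivalent: (1) $X$ is $QI_2$-continuous. (2) For every $x\in X$ there exists an irreducible subset $\mathcal F$ of $P_S(X)$ with $\mathcal F\subseteq w(x)$ and $\uparrow x=\bigcap\mathcal F$.
   Context: For a $T_0$ space $X$, the specialization order is $x\le y$ iff $x\in \mathrm{cl}\{y\}$; $\uparrow A=\{x: a\le x\text{ for some } a\in A\}$, $\uparrow x=\uparrow\{x\}$; $A^\uparrow$, $A^\downarrow$ are the sets of upper and lower bounds of $A$, and $A^\delta=(A^\uparrow)^\downarrow$. A nonempty subset $A$ of a space is irreducible if whenever $A\subseteq F_1\cup F_2$ with $F_1,F_2$ closed, $A\subseteq F_1$ or $A\subseteq F_2$. $X^{(<\omega)}$ is the set of nonempty finite subsets of $X$. $P_S(X)$ is the set of nonempty compact saturated (upper) subsets of $X$ with the upper Vietoris topology, basis $\{\square U: U\text{ open}\}$, $\square U=\{Q: Q\subseteq U\}$. For $A\subseteq X$, $x\in X$, $A\ll_{I_2}x$ means: for every irreducible $D\subseteq X$ with $x\in D^\delta$, $A\cap\mathrm{cl}D\ne\emptyset$. For $x\in X$, $w(x)=\{\uparrow F: F\in X^{(<\omega)}, F\ll_{I_2}x\}$. $X$ is $QI_2$-continuous if for every $x\in X$, $w(x)$ is an irreducible subset of $P_S(X)$ and $\uparrow x=\bigcap w(x)$. *)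

theory Defs
  imports "HOL-Analysis.Analysis"
begin

definition spec_le :: "'a topology \<Rightarrow> 'a \<Rightarrow> 'a \<Rightarrow> bool" where
  "spec_le X x y \<longleftrightarrow> x \<in> topspace X \<and> y \<in> topspace X \<and> x \<in> X closure_of {y}"

definition up_set :: "'a topology \<Rightarrow> 'a set \<Rightarrow> 'a set" where
  "up_set X A = {x \<in> topspace X. \<exists>a\<in>A. spec_le X a x}"

definition upper_bounds :: "'a topology \<Rightarrow> 'a set \<Rightarrow> 'a set" where
  "upper_bounds X A = {y \<in> topspace X. \<forall>a\<in>A. spec_le X a y}"

definition lower_bounds :: "'a topology \<Rightarrow> 'a set \<Rightarrow> 'a set" where
  "lower_bounds X A = {y \<in> topspace X. \<forall>a\<in>A. spec_le X y a}"

definition delta_cut :: "'a topology \<Rightarrow> 'a set \<Rightarrow> 'a set" where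
  "delta_cut X A = lower_bounds X (upper_bounds X A)"

definition irreducible_in :: "'a topology \<Rightarrow> 'a set \<Rightarrow> bool" where
  "irreducible_in X A \<longleftrightarrow> A \<noteq> {} \<and> A \<subseteq> topspace X \<and>
     (\<forall>F1 F2. closedin X F1 \<and> closedin X F2 \<and> A \<subseteq> F1 \<union> F2 \<longrightarrow> A \<subseteq> F1 \<or> A \<subseteq> F2)"

definition PS_carrier :: "'a topology \<Rightarrow> 'a set set" where
  "PS_carrier X = {Q. Q \<noteq> {} \<and> compactin X Q \<and> up_set X Q = Q}"

definition box :: "'a topology \<Rightarrow> 'a set \<Rightarrow> 'a set set" where
  "box X U = {Q \<in> PS_carrier X. Q \<subseteq> U}"

definition PS :: "'a topology \<Rightarrow> 'a set topology" where
  "PS X = topology_generated_by {box X U | U. openin X U}"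

definition way_below_I2 :: "'a topology \<Rightarrow> 'a set \<Rightarrow> 'a \<Rightarrow> bool" where
  "way_below_I2 X A x \<longleftrightarrow>
     (\<forall>D. irreducible_in X D \<and> x \<in> delta_cut X D \<longrightarrow> A \<inter> X closure_of D \<noteq> {})"

definition w_set :: "'a topology \<Rightarrow> 'a \<Rightarrow> 'a set set" where
  "w_set X x = {up_set X F | F. finite F \<and> F \<noteq> {} \<and> F \<subseteq> topspace X \<and> way_below_I2 X F x}"

definition QI2_continuous :: "'a topology \<Rightarrow> bool" where
  "QI2_continuous X \<longleftrightarrow> (\<forall>x\<in>topspace X.
     irreducible_in (PS X) (w_set X x) \<and> up_set X {x} = \<Inter>(w_set X x))"

end

theory Submission
  imports Defs
begin

text \<open>
  Only (2) \<Longrightarrow> (1) needs an argument. Its heart is an approximation property: if \<open>\<F>\<close> is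
  irreducible in \<open>P\<^sub>S(X)\<close> with \<open>\<Inter>\<F> = \<up>x\<close>, and \<open>\<up>F \<subseteq> U\<close> for some \<open>\<up>F \<in> w(x)\<close> and open \<open>U\<close>,
  then some member of \<open>\<F>\<close> already lies in \<open>U\<close>. Otherwise every member of \<open>\<F>\<close> meets \<open>X - U\<close>,
  and the topological Rudin lemma yields an irreducible closed \<open>C \<subseteq> X - U\<close> meeting every member
  of \<open>\<F>\<close>; as these members are upper sets, the upper bounds of \<open>C\<close> lie in \<open>\<Inter>\<F> = \<up>x\<close>, so
  \<open>x \<in> C\<^sup>\<delta>\<close>, and \<open>F \<ll>\<^sub>I\<^sub>2 x\<close> forces \<open>F\<close> to meet \<open>C\<close>, a contradiction. Approximation puts
  \<open>w(x)\<close> into the closure of \<open>\<F> \<subseteq> w(x)\<close>, so \<open>w(x)\<close> is irreducible; and \<open>\<Inter>w(x) = \<up>x\<close>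
  because \<open>x \<in> \<up>F\<close> whenever \<open>F \<ll>\<^sub>I\<^sub>2 x\<close> (test with \<open>D = {x}\<close>).
\<close>

lemma spec_le_refl: "a \<in> topspace X \<Longrightarrow> spec_le X a a"
  unfolding spec_le_def using closure_of_subset[of "{a}" X] by auto

lemma spec_le_trans:
  assumes "spec_le X a b" "spec_le X b c" shows "spec_le X a c"
proof -
  have "X closure_of {b} \<subseteq> X closure_of (X closure_of {c})"
    using assms(2) unfolding spec_le_def by (intro closure_of_mono) auto
  then show ?thesis using assms unfolding spec_le_def by auto
qed

lemma openin_spec_le_upward:
  assumes "openin X U" "a \<in> U" "spec_le X a y" shows "y \<in> U"
  using assms unfolding spec_le_def in_closure_of by blast

lemma up_set_mono: "A \<subseteq> B \<Longrightarrow> up_set X A \<subseteq> up_set X B"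
  unfolding up_set_def by blast

lemma subset_up_set:
  assumes "A \<subseteq> topspace X" shows "A \<subseteq> up_set X A"
proof
  fix a assume "a \<in> A"
  with assms have "a \<in> topspace X" by blast
  then have "spec_le X a a" by (rule spec_le_refl)
  with \<open>a \<in> A\<close> \<open>a \<in> topspace X\<close> show "a \<in> up_set X A" unfolding up_set_def by blast
qed

lemma up_set_idem: "up_set X (up_set X A) = up_set X A"
proof
  show "up_set X (up_set X A) \<subseteq> up_set X A"
  proof
    fix y assume "y \<in> up_set X (up_set X A)"
    then obtain b where b: "b \<in> up_set X A" "spec_le X b y" "y \<in> topspace X"
      unfolding up_set_def by blast
    then obtain a where a: "a \<in> A" "spec_le X a b" unfolding up_set_def by blast
    have "spec_le X a y" using a(2) b(2) by (rule spec_le_trans)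
    with a(1) b(3) show "y \<in> up_set X A" unfolding up_set_def by blast
  qed
  show "up_set X A \<subseteq> up_set X (up_set X A)"
    by (rule subset_up_set) (auto simp: up_set_def)
qed

lemma compactin_up_set:
  assumes "finite F" "F \<subseteq> topspace X" shows "compactin X (up_set X F)"
  unfolding compactin_def
proof (intro conjI allI impI)
  show "up_set X F \<subseteq> topspace X" unfolding up_set_def by auto
  fix \<U> assume \<U>: "(\<forall>U\<in>\<U>. openin X U) \<and> up_set X F \<subseteq> \<Union>\<U>"
  then have "\<forall>a\<in>F. \<exists>U\<in>\<U>. a \<in> U" using subset_up_set[OF assms(2)] by blast
  then obtain f where f: "\<And>a. a \<in> F \<Longrightarrow> f a \<in> \<U> \<and> a \<in> f a" by metis
  have "y \<in> \<Union>(f ` F)" if "y \<in> up_set X F" for y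
  proof -
    obtain a where a: "a \<in> F" "spec_le X a y" using \<open>y \<in> up_set X F\<close> unfolding up_set_def by blast
    then have "f a \<in> \<U>" "a \<in> f a" using f by blast+
    then have "y \<in> f a" using \<U> openin_spec_le_upward[of X "f a" a y] a(2) by blast
    with \<open>f a \<in> \<U>\<close> a(1) show ?thesis by blast
  qed
  then have "up_set X F \<subseteq> \<Union>(f ` F)" by blast
  moreover have "f ` F \<subseteq> \<U>" using f by blast
  ultimately show "\<exists>\<F>. finite \<F> \<and> \<F> \<subseteq> \<U> \<and> up_set X F \<subseteq> \<Union>\<F>"
    using assms(1) by blast
qed

lemma up_set_in_PS_carrier:
  assumes "finite F" "F \<noteq> {}" "F \<subseteq> topspace X" shows "up_set X F \<in> PS_carrier X"
  unfolding PS_carrier_def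
  using subset_up_set[OF assms(3)] assms(2) compactin_up_set[OF assms(1,3)]
  by (auto simp: up_set_idem)

lemma PS_carrier_upward:
  assumes "G \<in> PS_carrier X" "c \<in> G" "spec_le X c y" shows "y \<in> G"
proof -
  have "y \<in> up_set X G" using assms(2,3) unfolding up_set_def spec_le_def by blast
  then show ?thesis using assms(1) unfolding PS_carrier_def by simp
qed

lemma w_set_subset_PS_carrier: "w_set X x \<subseteq> PS_carrier X"
proof
  fix Q assume "Q \<in> w_set X x"
  then obtain F where "Q = up_set X F" "finite F" "F \<noteq> {}" "F \<subseteq> topspace X"
    unfolding w_set_def by blast
  then show "Q \<in> PS_carrier X" using up_set_in_PS_carrier by simp
qed

lemma PS_carrier_subset_topspace: "Q \<in> PS_carrier X \<Longrightarrow> Q \<subseteq> topspace X"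
  unfolding PS_carrier_def by (simp add: compactin_subset_topspace)

lemma topspace_PS: "topspace (PS X) = PS_carrier X"
proof -
  have "topspace (PS X) = \<Union>{box X U | U. openin X U}" unfolding PS_def by simp
  also have "\<dots> = PS_carrier X"
  proof
    show "\<Union>{box X U | U. openin X U} \<subseteq> PS_carrier X" unfolding box_def by blast
    have "PS_carrier X \<subseteq> box X (topspace X)"
      unfolding box_def using PS_carrier_subset_topspace by blast
    then show "PS_carrier X \<subseteq> \<Union>{box X U | U. openin X U}" by blast
  qed
  finally show ?thesis .
qed

lemma openin_PS_box: "openin X U \<Longrightarrow> openin (PS X) (box X U)"
  unfolding PS_def by (rule topology_generated_by_Basis) blast

lemma generate_topology_on_Int_closed_base:
  assumes "generate_topology_on \<B> V" "x \<in> V"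
    and Int_closed: "\<And>S T. S \<in> \<B> \<Longrightarrow> T \<in> \<B> \<Longrightarrow> S \<inter> T \<in> \<B>"
  shows "\<exists>B\<in>\<B>. x \<in> B \<and> B \<subseteq> V"
  using assms(1,2)
proof (induction arbitrary: x rule: generate_topology_on.induct)
  case Empty
  then show ?case by simp
next
  case (Int S T)
  then obtain B1 B2 where "B1 \<in> \<B>" "x \<in> B1" "B1 \<subseteq> S" "B2 \<in> \<B>" "x \<in> B2" "B2 \<subseteq> T"
    by (meson IntD1 IntD2)
  then have "B1 \<inter> B2 \<in> \<B>" "x \<in> B1 \<inter> B2" "B1 \<inter> B2 \<subseteq> S \<inter> T"
    using Int_closed by auto
  then show ?case by blast
next
  case (UN K)
  then obtain k where "k \<in> K" "x \<in> k" by blast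
  with UN.IH obtain B where "B \<in> \<B>" "x \<in> B" "B \<subseteq> k" by blast
  with \<open>k \<in> K\<close> show ?case by blast
next
  case (Basis s)
  then show ?case by blast
qed

lemma PS_box_neighbourhood:
  assumes "openin (PS X) \<V>" "Q \<in> \<V>"
  shows "\<exists>U. openin X U \<and> Q \<in> box X U \<and> box X U \<subseteq> \<V>"
proof -
  let ?\<B> = "{box X U | U. openin X U}"
  have generated: "generate_topology_on ?\<B> \<V>"
    using assms(1) unfolding PS_def by (rule openin_topology_generated_by)
  have Int_closed: "S \<inter> T \<in> ?\<B>" if ST: "S \<in> ?\<B>" "T \<in> ?\<B>" for S T
  proof -
    obtain U U' where "S = box X U" "T = box X U'" "openin X U" "openin X U'"
      using ST by blast
    moreover have "box X U \<inter> box X U' = box X (U \<inter> U')"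
      unfolding box_def by auto
    ultimately have "S \<inter> T = box X (U \<inter> U')" "openin X (U \<inter> U')" by auto
    then show ?thesis by blast
  qed
  have "\<exists>B\<in>?\<B>. Q \<in> B \<and> B \<subseteq> \<V>"
    by (rule generate_topology_on_Int_closed_base[OF generated assms(2) Int_closed])
  then show ?thesis by auto
qed

lemma irreducible_inD:
  assumes "irreducible_in T S" "closedin T F1" "closedin T F2" "S \<subseteq> F1 \<union> F2"
  shows "S \<subseteq> F1 \<or> S \<subseteq> F2"
  using assms unfolding irreducible_in_def by blast

lemma irreducible_in_openin_Int:
  assumes "irreducible_in T S" "openin T V1" "openin T V2" "S \<inter> V1 \<noteq> {}" "S \<inter> V2 \<noteq> {}"
  shows "S \<inter> V1 \<inter> V2 \<noteq> {}"
proof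
  assume "S \<inter> V1 \<inter> V2 = {}"
  moreover have "S \<subseteq> topspace T" using assms(1) unfolding irreducible_in_def by blast
  ultimately have "S \<subseteq> (topspace T - V1) \<union> (topspace T - V2)" by blast
  moreover have "closedin T (topspace T - V1)" "closedin T (topspace T - V2)"
    using assms(2,3) by (simp_all add: closedin_diff)
  ultimately have "S \<subseteq> topspace T - V1 \<or> S \<subseteq> topspace T - V2"
    using irreducible_inD[OF assms(1)] by blast
  then show False using assms(4,5) by blast
qed

lemma irreducible_in_intermediate_closure:
  assumes "irreducible_in T S" "S \<subseteq> W" "W \<subseteq> T closure_of S"
  shows "irreducible_in T W"
  unfolding irreducible_in_def
proof (intro conjI allI impI)
  show "W \<noteq> {}" using assms(1,2) unfolding irreducible_in_def by blast
  show "W \<subseteq> topspace T" using assms(3) closure_of_subset_topspace by (rule order_trans)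
  fix F1 F2 assume F: "closedin T F1 \<and> closedin T F2 \<and> W \<subseteq> F1 \<union> F2"
  then have "S \<subseteq> F1 \<or> S \<subseteq> F2"
    using irreducible_inD[OF assms(1)] assms(2) by blast
  then show "W \<subseteq> F1 \<or> W \<subseteq> F2"
    using closure_of_minimal[of S F1 T] closure_of_minimal[of S F2 T] F assms(3) by blast
qed

lemma exists_maximal_open_containing_no_compact:
  assumes compact: "\<forall>K\<in>\<A>. compactin X K"
    and V0: "openin X V0" "\<forall>K\<in>\<A>. \<not> K \<subseteq> V0"
  shows "\<exists>V. openin X V \<and> V0 \<subseteq> V \<and> (\<forall>K\<in>\<A>. \<not> K \<subseteq> V) \<and>
           (\<forall>W. openin X W \<and> V \<subseteq> W \<and> (\<forall>K\<in>\<A>. \<not> K \<subseteq> W) \<longrightarrow> W = V)"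
proof -
  define \<O> where "\<O> = {V. openin X V \<and> V0 \<subseteq> V \<and> (\<forall>K\<in>\<A>. \<not> K \<subseteq> V)}"
  have "\<exists>V\<in>\<O>. \<forall>W\<in>\<O>. V \<subseteq> W \<longrightarrow> W = V"
  proof (rule subset_Zorn_nonempty)
    show "\<O> \<noteq> {}" using V0 unfolding \<O>_def by blast
  next
    fix \<C> assume \<C>: "\<C> \<noteq> {}" "subset.chain \<O> \<C>"
    then have \<C>\<O>: "\<C> \<subseteq> \<O>" unfolding subset.chain_def by blast
    then have open_\<C>: "\<forall>U\<in>\<C>. openin X U" unfolding \<O>_def by blast
    have "\<not> K \<subseteq> \<Union>\<C>" if K: "K \<in> \<A>" for K
    proof
      assume "K \<subseteq> \<Union>\<C>"
      then obtain \<F> where \<F>: "finite \<F>" "\<F> \<subseteq> \<C>" "K \<subseteq> \<Union>\<F>"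
        using compact K open_\<C> unfolding compactin_def by meson
      have "\<F> \<noteq> {}" using \<F>(3) V0(2) K by blast
      moreover have "subset.chain \<O> \<F>"
        using \<C>(2) \<F>(2) \<C>\<O> unfolding subset.chain_def by blast
      ultimately have "\<Union>\<F> \<in> \<F>" using \<F>(1) Union_in_chain by blast
      then show False using \<F>(2,3) \<C>\<O> K unfolding \<O>_def by blast
    qed
    moreover have "openin X (\<Union>\<C>)" using open_\<C> by (simp add: openin_Union)
    moreover have "V0 \<subseteq> \<Union>\<C>" using \<C>(1) \<C>\<O> unfolding \<O>_def by blast
    ultimately show "\<Union>\<C> \<in> \<O>" unfolding \<O>_def by blast
  qed
  then obtain V where "V \<in> \<O>" "\<forall>W\<in>\<O>. V \<subseteq> W \<longrightarrow> W = V" by blast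
  then show ?thesis unfolding \<O>_def by (intro exI[of _ V]) auto
qed

lemma irreducible_in_PS_subset_PS_carrier:
  "irreducible_in (PS X) \<A> \<Longrightarrow> \<A> \<subseteq> PS_carrier X"
  unfolding irreducible_in_def topspace_PS by blast

lemma irreducible_in_complement_maximal_open:
  assumes irr: "irreducible_in (PS X) \<A>"
    and V: "openin X V" "\<forall>K\<in>\<A>. \<not> K \<subseteq> V"
    and maximal: "\<forall>W. openin X W \<and> V \<subseteq> W \<and> (\<forall>K\<in>\<A>. \<not> K \<subseteq> W) \<longrightarrow> W = V"
  shows "irreducible_in X (topspace X - V)"
  unfolding irreducible_in_def
proof (intro conjI allI impI)
  have \<A>: "\<A> \<subseteq> PS_carrier X" using irr by (rule irreducible_in_PS_subset_PS_carrier)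
  obtain K where "K \<in> \<A>" using irr unfolding irreducible_in_def by blast
  then have "K \<subseteq> topspace X" "\<not> K \<subseteq> V" using \<A> PS_carrier_subset_topspace V(2) by blast+
  then show "topspace X - V \<noteq> {}" by blast
  show "topspace X - V \<subseteq> topspace X" by blast
  fix F1 F2 assume F: "closedin X F1 \<and> closedin X F2 \<and> topspace X - V \<subseteq> F1 \<union> F2"
  show "topspace X - V \<subseteq> F1 \<or> topspace X - V \<subseteq> F2"
  proof (rule ccontr)
    assume "\<not> (topspace X - V \<subseteq> F1 \<or> topspace X - V \<subseteq> F2)"
    with F have F1: "closedin X F1" "\<not> topspace X - V \<subseteq> F1"
      and F2: "closedin X F2" "\<not> topspace X - V \<subseteq> F2" by auto
    \<comment> \<open>By maximality of \<open>V\<close>, enlarging it by the complement of \<open>F\<^sub>i\<close> swallows a member of \<open>\<A>\<close>.\<close>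
    have enlarged_open: "openin X (V \<union> (topspace X - F))"
      and enlarged_meets: "\<A> \<inter> box X (V \<union> (topspace X - F)) \<noteq> {}"
      if "closedin X F" "\<not> topspace X - V \<subseteq> F" for F
    proof -
      show "openin X (V \<union> (topspace X - F))"
        by (intro openin_Un openin_diff) (simp_all add: V(1) that(1))
      moreover have "V \<union> (topspace X - F) \<noteq> V" using that(2) by blast
      ultimately obtain K where "K \<in> \<A>" "K \<subseteq> V \<union> (topspace X - F)"
        using maximal by blast
      then show "\<A> \<inter> box X (V \<union> (topspace X - F)) \<noteq> {}"
        using \<A> unfolding box_def by blast
    qed
    have "\<A> \<inter> box X (V \<union> (topspace X - F1)) \<inter> box X (V \<union> (topspace X - F2)) \<noteq> {}"
      using irreducible_in_openin_Int[OF irr openin_PS_box openin_PS_box,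
          OF enlarged_open[OF F1] enlarged_open[OF F2] enlarged_meets[OF F1] enlarged_meets[OF F2]] .
    then obtain K where "K \<in> \<A>" "K \<subseteq> V \<union> (topspace X - F1)" "K \<subseteq> V \<union> (topspace X - F2)"
      unfolding box_def by blast
    then have "K \<subseteq> V" using F by blast
    then show False using V(2) \<open>K \<in> \<A>\<close> by blast
  qed
qed

lemma topological_Rudin_lemma:
  assumes irr: "irreducible_in (PS X) \<A>" and A: "closedin X A"
    and meet: "\<forall>K\<in>\<A>. K \<inter> A \<noteq> {}"
  shows "\<exists>C. closedin X C \<and> C \<subseteq> A \<and> (\<forall>K\<in>\<A>. C \<inter> K \<noteq> {}) \<and> irreducible_in X C"
proof -
  have \<A>: "\<A> \<subseteq> PS_carrier X" using irr by (rule irreducible_in_PS_subset_PS_carrier)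
  then have compact: "\<forall>K\<in>\<A>. compactin X K" unfolding PS_carrier_def by auto
  have K_topspace: "\<forall>K\<in>\<A>. K \<subseteq> topspace X" using \<A> PS_carrier_subset_topspace by blast
  have open_complement: "openin X (topspace X - A)" using A by (simp add: openin_diff)
  have avoids_complement: "\<forall>K\<in>\<A>. \<not> K \<subseteq> topspace X - A"
    using meet by auto
  obtain V where V: "openin X V" "topspace X - A \<subseteq> V" "\<forall>K\<in>\<A>. \<not> K \<subseteq> V"
    and maximal: "\<forall>W. openin X W \<and> V \<subseteq> W \<and> (\<forall>K\<in>\<A>. \<not> K \<subseteq> W) \<longrightarrow> W = V"
    using exists_maximal_open_containing_no_compact[OF compact open_complement avoids_complement]
    by (elim exE conjE) (rule that)
  have "closedin X (topspace X - V)" using V(1) by (simp add: closedin_diff)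
  moreover have "topspace X - V \<subseteq> A" using V(2) closedin_subset[OF A] by blast
  moreover have "\<forall>K\<in>\<A>. (topspace X - V) \<inter> K \<noteq> {}" using V(3) K_topspace by blast
  moreover have "irreducible_in X (topspace X - V)"
    using irreducible_in_complement_maximal_open[OF irr V(1,3) maximal] .
  ultimately show ?thesis by blast
qed

lemma way_below_I2_imp_mem_up_set:
  assumes "way_below_I2 X F x" "x \<in> topspace X"
  shows "x \<in> up_set X F"
proof -
  have "irreducible_in X {x}" using assms(2) unfolding irreducible_in_def by auto
  moreover have "x \<in> delta_cut X {x}"
    using assms(2) spec_le_refl
    unfolding delta_cut_def lower_bounds_def upper_bounds_def by auto
  ultimately have "F \<inter> X closure_of {x} \<noteq> {}"
    using assms(1) unfolding way_below_I2_def by blast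
  then obtain a where a: "a \<in> F" "a \<in> X closure_of {x}" by blast
  then have "a \<in> topspace X" using closure_of_subset_topspace[of X "{x}"] by blast
  with a assms(2) have "spec_le X a x" unfolding spec_le_def by blast
  with a(1) assms(2) show ?thesis unfolding up_set_def by blast
qed

lemma up_set_singleton_subset_w_set:
  assumes "Q \<in> w_set X x" "x \<in> topspace X"
  shows "up_set X {x} \<subseteq> Q"
proof -
  obtain F where Q: "Q = up_set X F" and F: "way_below_I2 X F x"
    using assms(1) unfolding w_set_def by blast
  have "{x} \<subseteq> Q" unfolding Q using way_below_I2_imp_mem_up_set[OF F assms(2)] by simp
  then have "up_set X {x} \<subseteq> up_set X Q" by (rule up_set_mono)
  also have "\<dots> = Q" unfolding Q by (rule up_set_idem)
  finally show ?thesis .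
qed

lemma upper_bounds_subset_Inter:
  assumes "\<F> \<subseteq> PS_carrier X" "\<forall>G\<in>\<F>. C \<inter> G \<noteq> {}"
  shows "upper_bounds X C \<subseteq> \<Inter>\<F>"
proof
  fix y assume y: "y \<in> upper_bounds X C"
  show "y \<in> \<Inter>\<F>"
  proof
    fix G assume G: "G \<in> \<F>"
    then obtain c where c: "c \<in> C" "c \<in> G" using assms(2) by blast
    have "G \<in> PS_carrier X" using G assms(1) by blast
    moreover have "spec_le X c y" using y c(1) unfolding upper_bounds_def by blast
    ultimately show "y \<in> G" by (rule PS_carrier_upward[OF _ c(2)])
  qed
qed

lemma w_set_approximation:
  assumes \<F>: "irreducible_in (PS X) \<F>" "up_set X {x} = \<Inter>\<F>"
    and x: "x \<in> topspace X" and Q: "Q \<in> w_set X x" "openin X U" "Q \<subseteq> U"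
  shows "\<exists>G\<in>\<F>. G \<subseteq> U"
proof (rule ccontr)
  assume no_G: "\<not> (\<exists>G\<in>\<F>. G \<subseteq> U)"
  obtain F where F: "Q = up_set X F" "F \<subseteq> topspace X" "way_below_I2 X F x"
    using Q(1) unfolding w_set_def by blast
  have \<F>_PS: "\<F> \<subseteq> PS_carrier X" using \<F>(1) by (rule irreducible_in_PS_subset_PS_carrier)
  have meets: "\<forall>G\<in>\<F>. G \<inter> (topspace X - U) \<noteq> {}"
  proof
    fix G assume G: "G \<in> \<F>"
    then have "G \<in> PS_carrier X" using \<F>_PS by blast
    then have "G \<subseteq> topspace X" by (rule PS_carrier_subset_topspace)
    moreover have "\<not> G \<subseteq> U" using G no_G by blast
    ultimately show "G \<inter> (topspace X - U) \<noteq> {}" by blast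
  qed
  have closed: "closedin X (topspace X - U)" using Q(2) by (simp add: closedin_diff)
  obtain C where C: "closedin X C" "C \<subseteq> topspace X - U" "\<forall>G\<in>\<F>. C \<inter> G \<noteq> {}"
    "irreducible_in X C"
    using topological_Rudin_lemma[OF \<F>(1) closed meets] by blast
  have "upper_bounds X C \<subseteq> up_set X {x}"
    using upper_bounds_subset_Inter[OF \<F>_PS C(3)] \<F>(2) by simp
  then have "x \<in> delta_cut X C"
    using x unfolding delta_cut_def lower_bounds_def up_set_def by blast
  then have "F \<inter> X closure_of C \<noteq> {}"
    using F(3) C(4) unfolding way_below_I2_def by blast
  moreover have "X closure_of C = C" using C(1) by (simp add: closure_of_eq)
  moreover have "F \<subseteq> U" using F(1,2) Q(3) subset_up_set by blast
  ultimately show False using C(2) by blast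
qed

lemma w_set_subset_closure:
  assumes "irreducible_in (PS X) \<F>" "up_set X {x} = \<Inter>\<F>" "x \<in> topspace X"
  shows "w_set X x \<subseteq> PS X closure_of \<F>"
proof
  fix Q assume Q: "Q \<in> w_set X x"
  have "\<exists>G\<in>\<F>. G \<in> \<V>" if \<V>: "openin (PS X) \<V>" "Q \<in> \<V>" for \<V>
  proof -
    obtain U where U: "openin X U" "Q \<in> box X U" "box X U \<subseteq> \<V>"
      using PS_box_neighbourhood[OF \<V>] by blast
    then obtain G where "G \<in> \<F>" "G \<subseteq> U"
      using w_set_approximation[OF assms Q] unfolding box_def by blast
    moreover have "G \<in> PS_carrier X"
      using \<open>G \<in> \<F>\<close> irreducible_in_PS_subset_PS_carrier[OF assms(1)] by blast
    ultimately show ?thesis using U(3) unfolding box_def by blast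
  qed
  moreover have "Q \<in> topspace (PS X)"
    using Q w_set_subset_PS_carrier[of X x] unfolding topspace_PS by blast
  ultimately show "Q \<in> PS X closure_of \<F>" unfolding in_closure_of by blast
qed

lemma Inter_w_set_eq:
  assumes "\<F> \<subseteq> w_set X x" "up_set X {x} = \<Inter>\<F>" "x \<in> topspace X"
  shows "up_set X {x} = \<Inter>(w_set X x)"
proof (rule subset_antisym)
  show "up_set X {x} \<subseteq> \<Inter>(w_set X x)"
    by (intro Inter_greatest up_set_singleton_subset_w_set assms(3))
  show "\<Inter>(w_set X x) \<subseteq> up_set X {x}"
    unfolding assms(2) using assms(1) by (rule Inter_anti_mono)
qed

lemma irreducible_in_w_set:
  assumes "irreducible_in (PS X) \<F>" "\<F> \<subseteq> w_set X x" "up_set X {x} = \<Inter>\<F>" "x \<in> topspace X"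
  shows "irreducible_in (PS X) (w_set X x)"
  using irreducible_in_intermediate_closure[OF assms(1,2) w_set_subset_closure[OF assms(1,3,4)]] .

theorem proposition4p5:
  fixes X :: "'a topology"
  assumes "t0_space X"
  shows "QI2_continuous X \<longleftrightarrow>
    (\<forall>x\<in>topspace X. \<exists>\<F>. irreducible_in (PS X) \<F> \<and> \<F> \<subseteq> w_set X x \<and>
        up_set X {x} = \<Inter>\<F>)"
proof
  assume "QI2_continuous X"
  then show "\<forall>x\<in>topspace X. \<exists>\<F>. irreducible_in (PS X) \<F> \<and> \<F> \<subseteq> w_set X x \<and>
        up_set X {x} = \<Inter>\<F>"
    unfolding QI2_continuous_def by blast
next
  assume approx: "\<forall>x\<in>topspace X. \<exists>\<F>. irreducible_in (PS X) \<F> \<and> \<F> \<subseteq> w_set X x \<and>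
        up_set X {x} = \<Inter>\<F>"
  show "QI2_continuous X"
    unfolding QI2_continuous_def
  proof
    fix x assume x: "x \<in> topspace X"
    then obtain \<F> where \<F>: "irreducible_in (PS X) \<F>" "\<F> \<subseteq> w_set X x" "up_set X {x} = \<Inter>\<F>"
      using approx by blast
    show "irreducible_in (PS X) (w_set X x) \<and> up_set X {x} = \<Inter>(w_set X x)"
      using irreducible_in_w_set[OF \<F> x] Inter_w_set_eq[OF \<F>(2,3) x] ..
  qed
qed

end
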